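(* Fix $\omega$, let $v$ be a blocked path, let $\hat v(i)=v(i-\delta)+2\delta v'(i-\delta)$ for $i\in\mathbb{Z}$ and $\Delta_d\hat v(i)=\hat v(i+1)-2\hat v(i)+\hat v(i-1)$. Let $\hat F=F\int_{\delta}^{1-\delta}\chi_A^\varepsilon(x)\,dx$. Then $F(1-2(\delta+\varepsilon))\le\hat F\le(1-2\delta)F$, and for every $i\in\mathbb{Z}$ $$-2\delta\big[v'(i-1+\delta)-v'(i-1-\delta)\big]\le\Delta_d\hat v(i)+\hat F\le(1+2\delta)\big[v'(i+\delta)-v'(i-\delta)\big].$$
   Context: Fix $0<\delta\ll1/2$, $F>0$ and $\varepsilon\in(0,\tfrac12-\delta)$. Let $\mathbb{Z}^*=\mathbb{Z}+\tfrac12$, $b_{i,j}=(i,j)$; $\phi\in C_c^\infty(\mathbb{R}^2)$ nonnegative with support in $[-\delta,\delta]^2$, $\phi_{i,j}(x,s)=\phi((x,s)-b_{i,j})$; $(l(i,j)(\omega))_{(i,j)\in\mathbb{Z}\times\mathbb{Z}^*}$ nonnegative (i.i.d. exponential) random variables. Let $A=\mathbb{R}\setminus\bigcup_{i\in\mathbb{Z}}(i-\delta,i+\delta)$, $A_\varepsilon=\mathbb{R}\setminus\bigcup_{i\in\mathbb{Z}}(i-\delta-\varepsilon,i+\delta+\varepsilon)$, and $\chi_A^\varepsilon$ a smooth $1$-periodic function with $\chi_{A_\varepsilon}\le\chi_A^\varepsilon\le\chi_A$. A blocked path is a function $v\in C^1_{loc}(\mathbb{R})$ such that for every $i\in\mathbb{Z}$: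 $v''(x)=-F\chi_A^\varepsilon(x)$ on $(i+\delta,i+1-\delta)$ and $v''(x)=\sum_{j\in\mathbb{Z}^*}l(i,j)(\omega)\phi_{i,j}(x,v(x))$ on $(i-\delta,i+\delta)$. *)

theory Defs
  imports "HOL-Analysis.Analysis"
begin

coinductive smooth_fun :: "('a::real_normed_vector \<Rightarrow> real) \<Rightarrow> bool" where
  "(\<forall>x. f differentiable (at x)) \<Longrightarrow>
   (\<forall>h. smooth_fun (\<lambda>x. frechet_derivative f (at x) h)) \<Longrightarrow> smooth_fun f"

definition setA :: "real \<Rightarrow> real set" where
  "setA \<delta> = UNIV - (\<Union>i::int. {real_of_int i - \<delta> <..< real_of_int i + \<delta>})"

definition setA_eps :: "real \<Rightarrow> real \<Rightarrow> real set" where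
  "setA_eps \<delta> \<epsilon> = UNIV - (\<Union>i::int. {real_of_int i - \<delta> - \<epsilon> <..< real_of_int i + \<delta> + \<epsilon>})"

definition half_ints :: "real set" where
  "half_ints = {j. \<exists>k::int. j = real_of_int k + 1/2}"

text \<open>Blocked path (for a fixed realisation l of the random weights, indexed by
  (i,j) with i an integer and j a half-integer).\<close>
definition blocked_path ::
  "real \<Rightarrow> real \<Rightarrow> (real \<times> real \<Rightarrow> real) \<Rightarrow> (int \<Rightarrow> real \<Rightarrow> real) \<Rightarrow> (real \<Rightarrow> real)
   \<Rightarrow> (real \<Rightarrow> real) \<Rightarrow> bool" where
  "blocked_path \<delta> F \<phi> l chi v \<longleftrightarrow>
     (\<forall>x. v differentiable (at x)) \<and> continuous_on UNIV (deriv v) \<and>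
     (\<forall>i::int. \<forall>x \<in> {real_of_int i + \<delta> <..< real_of_int i + 1 - \<delta>}.
        (deriv v has_real_derivative (- F * chi x)) (at x)) \<and>
     (\<forall>i::int. \<forall>x \<in> {real_of_int i - \<delta> <..< real_of_int i + \<delta>}.
        (deriv v has_real_derivative
           (\<Sum>\<^sub>\<infinity>j\<in>half_ints. l i j * \<phi> (x - real_of_int i, v x - j))) (at x))"

end

theory Submission
  imports Defs "HOL-Library.Periodic_Fun"
begin

text \<open>Write a(i) = v'(i - \<delta>) and b(i) = v'(i + \<delta>). On each gap (i + \<delta>, i + 1 - \<delta>) the path
  solves v'' = -F \<chi> with \<chi> 1-periodic, so v' drops by exactly F-hat across every gap, and two
  consecutive gaps carry the same forcing, so the difference of v across them is affine with slope
  b(i) - b(i - 1). On each bump (i - \<delta>, i + \<delta>) the path is convex, which squeezes the increment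
  v(i + \<delta>) - v(i - \<delta>) between 2\<delta> a(i) and 2\<delta> b(i).\<close>

lemma smooth_fun_continuous_on: "smooth_fun f \<Longrightarrow> continuous_on S f"
  by (erule smooth_fun.cases)
    (meson continuous_at_imp_continuous_on differentiable_imp_continuous_within)

lemma DERIV_const_imp_increment:
  fixes f :: "real \<Rightarrow> real"
  assumes "a \<le> b" and "continuous_on {a..b} f"
    and deriv: "\<And>x. a < x \<Longrightarrow> x < b \<Longrightarrow> DERIV f x :> c"
  shows "f b - f a = c * (b - a)"
proof (cases "a = b")
  case False
  have "(\<lambda>x. f x - c * x) b = (\<lambda>x. f x - c * x) a"
  proof (rule DERIV_isconst_end[where f = "\<lambda>x. f x - c * x"])
    show "a < b" using False \<open>a \<le> b\<close> by simp
    show "continuous_on {a..b} (\<lambda>x. f x - c * x)"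
      using \<open>continuous_on {a..b} f\<close> by (intro continuous_intros)
    show "DERIV (\<lambda>x. f x - c * x) x :> 0" if "a < x" "x < b" for x
      using DERIV_diff[OF deriv[OF that] DERIV_cmult_Id[of c x]] by simp
  qed
  then show ?thesis by (simp add: algebra_simps)
qed simp

lemma increment_bounds_of_convex:
  fixes f f' :: "real \<Rightarrow> real"
  assumes "a \<le> b"
    and deriv: "\<And>x. a \<le> x \<Longrightarrow> x \<le> b \<Longrightarrow> DERIV f x :> f' x"
    and cont: "continuous_on {a..b} f'"
    and convex: "\<And>x. a < x \<Longrightarrow> x < b \<Longrightarrow> \<exists>y. DERIV f' x :> y \<and> 0 \<le> y"
  shows "f' a \<le> f' b \<and> f' a * (b - a) \<le> f b - f a \<and> f b - f a \<le> f' b * (b - a)"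
proof -
  have mono: "f' x \<le> f' y" if "a \<le> x" "x \<le> y" "y \<le> b" for x y
  proof (rule DERIV_nonneg_imp_increasing_open[OF \<open>x \<le> y\<close>])
    show "continuous_on {x..y} f'" by (rule continuous_on_subset[OF cont]) (use that in auto)
    show "\<exists>d. DERIV f' t :> d \<and> 0 \<le> d" if "x < t" "t < y" for t
      using convex that \<open>a \<le> x\<close> \<open>y \<le> b\<close> by simp
  qed
  show ?thesis
  proof (cases "a = b")
    case False
    then have "a < b" using \<open>a \<le> b\<close> by simp
    then obtain z where z: "a < z" "z < b" "f b - f a = (b - a) * f' z"
      using MVT2[OF _ deriv] by blast
    have "f' a * (b - a) \<le> f' z * (b - a)" "f' z * (b - a) \<le> f' b * (b - a)"
      using mono[of a z] mono[of z b] z \<open>a \<le> b\<close> by (simp_all add: mult_right_mono)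
    with z mono[of a b] \<open>a \<le> b\<close> show ?thesis by (simp add: mult.commute)
  qed simp
qed

lemma mem_setA_eps_unit_interval:
  assumes "\<delta> + \<epsilon> \<le> x" "x \<le> 1 - \<delta> - \<epsilon>"
  shows "x \<in> setA_eps \<delta> \<epsilon>"
proof -
  have "\<not> (real_of_int k - \<delta> - \<epsilon> < x \<and> x < real_of_int k + \<delta> + \<epsilon>)" for k
  proof (cases "k \<le> 0")
    case True
    then have "real_of_int k + \<delta> + \<epsilon> \<le> x" using assms by linarith
    then show ?thesis by simp
  next
    case False
    then have "x \<le> real_of_int k - \<delta> - \<epsilon>" using assms by linarith
    then show ?thesis by simp
  qed
  then show ?thesis by (auto simp: setA_eps_def)
qed

lemma integral_cutoff_bounds:
  fixes chi :: "real \<Rightarrow> real"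
  assumes "0 < \<epsilon>" "\<epsilon> < 1/2 - \<delta>"
    and cont: "continuous_on UNIV chi"
    and lower: "\<forall>x. indicator (setA_eps \<delta> \<epsilon>) x \<le> chi x"
    and upper: "\<forall>x. chi x \<le> indicator (setA \<delta>) x"
  shows "1 - 2 * (\<delta> + \<epsilon>) \<le> integral {\<delta>..1 - \<delta>} chi \<and> integral {\<delta>..1 - \<delta>} chi \<le> 1 - 2 * \<delta>"
proof -
  have chi_integrable: "chi integrable_on {a..b}" for a b
    using cont by (blast intro: integrable_continuous_interval continuous_on_subset)
  have unit: "0 \<le> chi x \<and> chi x \<le> 1" for x
  proof -
    have "(0::real) \<le> indicator (setA_eps \<delta> \<epsilon>) x" "indicator (setA \<delta>) x \<le> (1::real)"
      by (simp_all add: indicator_def)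
    then show ?thesis using lower upper by (meson order_trans)
  qed
  have one: "1 \<le> chi x" if "\<delta> + \<epsilon> \<le> x" "x \<le> 1 - \<delta> - \<epsilon>" for x
    using lower[rule_format, of x] mem_setA_eps_unit_interval[OF that] by simp
  have "1 - 2 * (\<delta> + \<epsilon>) = integral {\<delta> + \<epsilon>..1 - \<delta> - \<epsilon>} (\<lambda>x. 1::real)"
    using assms by simp
  also have "\<dots> \<le> integral {\<delta> + \<epsilon>..1 - \<delta> - \<epsilon>} chi"
    by (rule integral_le) (auto simp: chi_integrable one)
  also have "\<dots> \<le> integral {\<delta>..1 - \<delta>} chi"
    by (rule integral_subset_le) (use assms in \<open>auto simp: chi_integrable unit\<close>)
  finally have "1 - 2 * (\<delta> + \<epsilon>) \<le> integral {\<delta>..1 - \<delta>} chi" .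
  moreover have "integral {\<delta>..1 - \<delta>} chi \<le> integral {\<delta>..1 - \<delta>} (\<lambda>x. 1::real)"
    by (rule integral_le) (auto simp: chi_integrable unit)
  ultimately show ?thesis using assms by simp
qed

locale periodic_gaps =
  fixes \<delta> F :: real and chi v D :: "real \<Rightarrow> real"
  assumes delta_le: "\<delta> \<le> 1 - \<delta>"
    and chi_periodic: "\<And>x. chi (x + 1) = chi x"
    and v_deriv: "\<And>x. DERIV v x :> D x"
    and D_continuous: "continuous_on UNIV D"
    and D_deriv_gap: "\<And>(i::int) x. real_of_int i + \<delta> < x \<Longrightarrow> x < real_of_int i + 1 - \<delta> \<Longrightarrow>
      DERIV D x :> - F * chi x"
begin

interpretation chi: periodic_fun_simple' chi
  by unfold_locales (rule chi_periodic)

lemma shifted_D_deriv: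
  assumes "\<delta> < x" "x < 1 - \<delta>"
  shows "DERIV (\<lambda>x. D (x + real_of_int i)) x :> - F * chi x"
  using D_deriv_gap[of i "x + real_of_int i"] assms chi.plus_of_int[of x i]
  by (simp flip: DERIV_shift)

lemma D_drop_across_gap:
  "D (real_of_int i + 1 - \<delta>) = D (real_of_int i + \<delta>) - F * integral {\<delta>..1 - \<delta>} chi"
proof -
  let ?q = "\<lambda>x. D (x + real_of_int i)"
  have "((\<lambda>x. - F * chi x) has_integral ?q (1 - \<delta>) - ?q \<delta>) {\<delta>..1 - \<delta>}"
  proof (rule fundamental_theorem_of_calculus_interior[OF delta_le])
    show "continuous_on {\<delta>..1 - \<delta>} ?q"
      by (intro continuous_on_compose2[OF D_continuous] continuous_intros) auto
    show "(?q has_vector_derivative - F * chi x) (at x)" if "x \<in> {\<delta><..<1 - \<delta>}" for x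
      using shifted_D_deriv that by (simp add: has_real_derivative_iff_has_vector_derivative)
  qed
  then have "?q (1 - \<delta>) - ?q \<delta> = integral {\<delta>..1 - \<delta>} (\<lambda>x. - F * chi x)"
    by (rule integral_unique[symmetric])
  then show ?thesis by (simp add: algebra_simps)
qed

lemma v_increment_difference_across_gaps:
  "v (real_of_int i + 1 - \<delta>) - v (real_of_int i + \<delta>) - (v (real_of_int i - \<delta>) - v (real_of_int i - 1 + \<delta>))
     = (1 - 2 * \<delta>) * (D (real_of_int i + \<delta>) - D (real_of_int i - 1 + \<delta>))"
proof -
  let ?s = "\<lambda>x. D (x + real_of_int i) - D (x + real_of_int (i - 1))"
  let ?r = "\<lambda>x. v (x + real_of_int i) - v (x + real_of_int (i - 1))"
  have s_deriv: "DERIV ?s x :> 0" if "\<delta> < x" "x < 1 - \<delta>" for x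
  proof -
    have "DERIV ?s x :> - F * chi x - - F * chi x"
      by (rule DERIV_diff[OF shifted_D_deriv shifted_D_deriv]) (use that in auto)
    then show ?thesis by simp
  qed
  have s_cont: "continuous_on S ?s" for S
    by (intro continuous_on_compose2[OF D_continuous] continuous_intros) auto
  have s_const: "?s x = ?s \<delta>" if "\<delta> \<le> x" "x \<le> 1 - \<delta>" for x
    using DERIV_const_imp_increment[OF that(1) s_cont, of 0] s_deriv that by simp
  have v_cont: "continuous_on UNIV v"
    using v_deriv by (meson DERIV_isCont continuous_at_imp_continuous_on)
  have "?r (1 - \<delta>) - ?r \<delta> = ?s \<delta> * (1 - \<delta> - \<delta>)"
  proof (rule DERIV_const_imp_increment[OF delta_le])
    show "continuous_on {\<delta>..1 - \<delta>} ?r"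
      by (intro continuous_on_compose2[OF v_cont] continuous_intros) auto
    show "DERIV ?r x :> ?s \<delta>" if "\<delta> < x" "x < 1 - \<delta>" for x
    proof -
      have "DERIV ?r x :> ?s x"
        by (rule DERIV_diff; rule v_deriv[THEN DERIV_shift[THEN iffD1]])
      then show ?thesis using s_const[of x] that by simp
    qed
  qed
  then show ?thesis by (simp add: algebra_simps)
qed

end

text \<open>In the application a i = v'(i - \<delta>), b i = v'(i + \<delta>), p i = v(i - \<delta>) and q i = v(i + \<delta>).\<close>

lemma second_difference_bounds:
  fixes a b p q :: "int \<Rightarrow> real" and \<delta> Fh :: real
  assumes drop: "\<And>i. a (i + 1) = b i - Fh"
    and gaps: "\<And>i. p (i + 1) - q i - (p i - q (i - 1)) = (1 - 2 * \<delta>) * (b i - b (i - 1))"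
    and bump: "\<And>i. a i \<le> b i \<and> 2 * \<delta> * a i \<le> q i - p i \<and> q i - p i \<le> 2 * \<delta> * b i"
  defines "vh \<equiv> \<lambda>i. p i + 2 * \<delta> * a i"
  shows "- 2 * \<delta> * (b (i - 1) - a (i - 1)) \<le> vh (i + 1) - 2 * vh i + vh (i - 1) + Fh
    \<and> vh (i + 1) - 2 * vh i + vh (i - 1) + Fh \<le> (1 + 2 * \<delta>) * (b i - a i)"
proof -
  have Fh: "Fh = b (i - 1) - a i" using drop[of "i - 1"] by simp
  have p_next: "p (i + 1) = q i + p i - q (i - 1) + (1 - 2 * \<delta>) * (b i - b (i - 1))"
    using gaps[of i] by simp
  have "vh (i + 1) - 2 * vh i + vh (i - 1) + Fh
      = (b i - a i) + (q i - p i - 2 * \<delta> * a i) - (q (i - 1) - p (i - 1) - 2 * \<delta> * a (i - 1))"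
    unfolding vh_def drop p_next Fh by (simp add: algebra_simps)
  moreover note bump[of i] bump[of "i - 1"]
  ultimately show ?thesis by (simp add: algebra_simps)
qed

lemma blocked_path_periodic_gaps:
  assumes "blocked_path \<delta> F \<phi> l chi v" "\<delta> \<le> 1 - \<delta>"
    and "\<forall>x. chi (x + 1) = chi x"
  shows "periodic_gaps \<delta> F chi v (deriv v)"
  using assms by unfold_locales
    (auto simp: blocked_path_def DERIV_deriv_iff_real_differentiable)

lemma blocked_path_increment_bounds_on_bump:
  assumes hv: "blocked_path \<delta> F \<phi> l chi v" and "0 \<le> \<delta>"
    and \<phi>_nonneg: "\<forall>p. 0 \<le> \<phi> p" and l_nonneg: "\<forall>i j. j \<in> half_ints \<longrightarrow> 0 \<le> l i j"
  shows "deriv v (real_of_int i - \<delta>) \<le> deriv v (real_of_int i + \<delta>)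
    \<and> 2 * \<delta> * deriv v (real_of_int i - \<delta>) \<le> v (real_of_int i + \<delta>) - v (real_of_int i - \<delta>)
    \<and> v (real_of_int i + \<delta>) - v (real_of_int i - \<delta>) \<le> 2 * \<delta> * deriv v (real_of_int i + \<delta>)"
proof -
  have "\<exists>y. DERIV (deriv v) x :> y \<and> 0 \<le> y"
    if "real_of_int i - \<delta> < x" "x < real_of_int i + \<delta>" for x
  proof (intro exI conjI)
    show "DERIV (deriv v) x :> (\<Sum>\<^sub>\<infinity>j\<in>half_ints. l i j * \<phi> (x - real_of_int i, v x - j))"
      using hv that unfolding blocked_path_def by simp
    show "0 \<le> (\<Sum>\<^sub>\<infinity>j\<in>half_ints. l i j * \<phi> (x - real_of_int i, v x - j))"
      using \<phi>_nonneg l_nonneg by (intro infsum_nonneg) auto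
  qed
  moreover have "DERIV v x :> deriv v x" for x
    using hv by (simp add: blocked_path_def DERIV_deriv_iff_real_differentiable)
  moreover have "continuous_on {real_of_int i - \<delta>..real_of_int i + \<delta>} (deriv v)"
    using hv continuous_on_subset unfolding blocked_path_def by blast
  ultimately show ?thesis
    using increment_bounds_of_convex[of "real_of_int i - \<delta>" "real_of_int i + \<delta>" v "deriv v"]
      \<open>0 \<le> \<delta>\<close> by (simp add: algebra_simps)
qed

lemma blocked_path_second_difference_bounds:
  assumes hv: "blocked_path \<delta> F \<phi> l chi v" and "0 \<le> \<delta>" "\<delta> \<le> 1 - \<delta>"
    and \<phi>_nonneg: "\<forall>p. 0 \<le> \<phi> p" and l_nonneg: "\<forall>i j. j \<in> half_ints \<longrightarrow> 0 \<le> l i j"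
    and "\<forall>x. chi (x + 1) = chi x"
  defines "vh \<equiv> \<lambda>k::int. v (real_of_int k - \<delta>) + 2 * \<delta> * deriv v (real_of_int k - \<delta>)"
    and "Fh \<equiv> F * integral {\<delta>..1 - \<delta>} chi"
  shows "- 2 * \<delta> * (deriv v (real_of_int i - 1 + \<delta>) - deriv v (real_of_int i - 1 - \<delta>))
      \<le> vh (i + 1) - 2 * vh i + vh (i - 1) + Fh
    \<and> vh (i + 1) - 2 * vh i + vh (i - 1) + Fh
      \<le> (1 + 2 * \<delta>) * (deriv v (real_of_int i + \<delta>) - deriv v (real_of_int i - \<delta>))"
proof -
  interpret periodic_gaps \<delta> F chi v "deriv v"
    using assms by (intro blocked_path_periodic_gaps)
  have "- 2 * \<delta> * (deriv v (real_of_int (i - 1) + \<delta>) - deriv v (real_of_int (i - 1) - \<delta>))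
      \<le> vh (i + 1) - 2 * vh i + vh (i - 1) + Fh
    \<and> vh (i + 1) - 2 * vh i + vh (i - 1) + Fh
      \<le> (1 + 2 * \<delta>) * (deriv v (real_of_int i + \<delta>) - deriv v (real_of_int i - \<delta>))"
    unfolding vh_def
  proof (rule second_difference_bounds)
    show "deriv v (real_of_int (k + 1) - \<delta>) = deriv v (real_of_int k + \<delta>) - Fh" for k
      using D_drop_across_gap[of k] by (simp add: Fh_def add_diff_eq)
    show "v (real_of_int (k + 1) - \<delta>) - v (real_of_int k + \<delta>) - (v (real_of_int k - \<delta>) - v (real_of_int (k - 1) + \<delta>))
      = (1 - 2 * \<delta>) * (deriv v (real_of_int k + \<delta>) - deriv v (real_of_int (k - 1) + \<delta>))" for k
      using v_increment_difference_across_gaps[of k] by (simp add: add_diff_eq)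
  qed (rule blocked_path_increment_bounds_on_bump[OF hv \<open>0 \<le> \<delta>\<close> \<phi>_nonneg l_nonneg])
  then show ?thesis by (simp only: of_int_diff of_int_1)
qed

theorem mainTheorem5:
  fixes \<delta> F \<epsilon> :: real
    and \<phi> :: "real \<times> real \<Rightarrow> real"
    and l :: "int \<Rightarrow> real \<Rightarrow> real"
    and chi v :: "real \<Rightarrow> real"
  assumes hdelta: "0 < \<delta>" "\<delta> < 1/2"
    and hF: "0 < F"
    and heps: "0 < \<epsilon>" "\<epsilon> < 1/2 - \<delta>"
    and hphi_smooth: "smooth_fun \<phi>"
    and hphi_nonneg: "\<forall>p. 0 \<le> \<phi> p"
    and hphi_supp: "\<forall>x s. \<phi> (x, s) \<noteq> 0 \<longrightarrow> \<bar>x\<bar> \<le> \<delta> \<and> \<bar>s\<bar> \<le> \<delta>"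
    and hl: "\<forall>i j. j \<in> half_ints \<longrightarrow> 0 \<le> l i j"
    and hchi_smooth: "smooth_fun chi"
    and hchi_per: "\<forall>x. chi (x + 1) = chi x"
    and hchi_lo: "\<forall>x. indicator (setA_eps \<delta> \<epsilon>) x \<le> chi x"
    and hchi_hi: "\<forall>x. chi x \<le> indicator (setA \<delta>) x"
    and hv: "blocked_path \<delta> F \<phi> l chi v"
  shows "F * (1 - 2 * (\<delta> + \<epsilon>)) \<le> F * integral {\<delta>..1 - \<delta>} chi
       \<and> F * integral {\<delta>..1 - \<delta>} chi \<le> (1 - 2 * \<delta>) * F
       \<and> (\<forall>i::int.
           let vh = (\<lambda>k::int. v (real_of_int k - \<delta>) + 2 * \<delta> * deriv v (real_of_int k - \<delta>));
               Fh = F * integral {\<delta>..1 - \<delta>} chi;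
               Dd = vh (i + 1) - 2 * vh i + vh (i - 1)
           in - 2 * \<delta> * (deriv v (real_of_int i - 1 + \<delta>) - deriv v (real_of_int i - 1 - \<delta>)) \<le> Dd + Fh
              \<and> Dd + Fh \<le> (1 + 2 * \<delta>) * (deriv v (real_of_int i + \<delta>) - deriv v (real_of_int i - \<delta>)))"
proof -
  have chi_continuous: "continuous_on UNIV chi"
    using hchi_smooth by (rule smooth_fun_continuous_on)
  have delta: "0 \<le> \<delta>" "\<delta> \<le> 1 - \<delta>" using hdelta by simp_all
  have "1 - 2 * (\<delta> + \<epsilon>) \<le> integral {\<delta>..1 - \<delta>} chi \<and> integral {\<delta>..1 - \<delta>} chi \<le> 1 - 2 * \<delta>"
    using heps chi_continuous hchi_lo hchi_hi by (rule integral_cutoff_bounds)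
  then have "F * (1 - 2 * (\<delta> + \<epsilon>)) \<le> F * integral {\<delta>..1 - \<delta>} chi
      \<and> F * integral {\<delta>..1 - \<delta>} chi \<le> (1 - 2 * \<delta>) * F"
    using hF by (simp add: mult.commute[of _ F])
  then show ?thesis unfolding Let_def
    using blocked_path_second_difference_bounds[OF hv delta hphi_nonneg hl hchi_per]
    by (simp only: simp_thms)
qed

end
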